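(* Let $T_1$ and $T_2$ be subtrees of a tree $T$ such that $T=T_1\cup T_2$. Then $\operatorname{pw}(T)+1\le (\operatorname{pw}(T_1)+1)+(\operatorname{pw}(T_2)+1)$.
   Context: $\operatorname{pw}$ denotes pathwidth: the minimum, over all path decompositions (sequences of vertex subsets such that each edge lies in some set and each vertex lies in a non-empty consecutive run of sets), of the maximum set size minus 1. A subtree is a connected subgraph of $T$. *)

theory Defs
  imports Main
begin

definition graph :: "'a set \<Rightarrow> 'a set set \<Rightarrow> bool" where
  "graph V E \<longleftrightarrow> finite V \<and> (\<forall>e\<in>E. e \<subseteq> V \<and> card e = 2)"

definition walk :: "'a set \<Rightarrow> 'a set set \<Rightarrow> 'a list \<Rightarrow> bool" where
  "walk V E xs \<longleftrightarrow> xs \<noteq> [] \<and> set xs \<subseteq> V \<and>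
     (\<forall>i. Suc i < length xs \<longrightarrow> {xs ! i, xs ! Suc i} \<in> E)"

definition connected_graph :: "'a set \<Rightarrow> 'a set set \<Rightarrow> bool" where
  "connected_graph V E \<longleftrightarrow> graph V E \<and> V \<noteq> {} \<and>
     (\<forall>u\<in>V. \<forall>v\<in>V. \<exists>xs. walk V E xs \<and> hd xs = u \<and> last xs = v)"

definition is_cycle :: "'a set \<Rightarrow> 'a set set \<Rightarrow> 'a list \<Rightarrow> bool" where
  "is_cycle V E xs \<longleftrightarrow> walk V E xs \<and> distinct xs \<and> length xs \<ge> 3 \<and>
     {last xs, hd xs} \<in> E"

definition tree :: "'a set \<Rightarrow> 'a set set \<Rightarrow> bool" where
  "tree V E \<longleftrightarrow> connected_graph V E \<and> \<not> (\<exists>xs. is_cycle V E xs)"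

definition subgraph :: "'a set \<Rightarrow> 'a set set \<Rightarrow> 'a set \<Rightarrow> 'a set set \<Rightarrow> bool" where
  "subgraph V' E' V E \<longleftrightarrow> graph V' E' \<and> V' \<subseteq> V \<and> E' \<subseteq> E"

definition subtree :: "'a set \<Rightarrow> 'a set set \<Rightarrow> 'a set \<Rightarrow> 'a set set \<Rightarrow> bool" where
  "subtree V' E' V E \<longleftrightarrow> subgraph V' E' V E \<and> connected_graph V' E'"

definition path_decomp :: "'a set \<Rightarrow> 'a set set \<Rightarrow> 'a set list \<Rightarrow> bool" where
  "path_decomp V E bs \<longleftrightarrow>
     (\<forall>B\<in>set bs. B \<subseteq> V) \<and>
     (\<forall>e\<in>E. \<exists>B\<in>set bs. e \<subseteq> B) \<and>
     (\<forall>v\<in>V. (\<exists>B\<in>set bs. v \<in> B) \<and>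
        (\<forall>i j k. i \<le> j \<longrightarrow> j \<le> k \<longrightarrow> k < length bs \<longrightarrow>
           v \<in> bs ! i \<longrightarrow> v \<in> bs ! k \<longrightarrow> v \<in> bs ! j))"

definition pathwidth :: "'a set \<Rightarrow> 'a set set \<Rightarrow> nat" where
  "pathwidth V E = (LEAST k. \<exists>bs. path_decomp V E bs \<and> (\<forall>B\<in>set bs. card B \<le> k + 1))"

end

theory Submission
  imports Defs
begin

text \<open>
  Let T1 = (U, F) be the subtree. Every vertex r of T hangs off T1 at a unique vertex, its
  attachment: the vertex at which a walk from r first enters U. Two different attachments
  together with a walk inside T1 would give a detour around an edge of T, i.e. a cycle.
  For s in U let X s be the set of vertices of T2 attached at s. These sets are disjoint,
  meet U only in s, cover the vertices of T2 outside U, and every edge of T2 outside T1 lies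
  inside one of them (an edge of T with both ends in U is an edge of T1).

  Start from a path decomposition of T1 with bags of size at most pw(T1) + 1. For each s in U,
  insert right after a bag B containing s the restriction to X s of a path decomposition of T2,
  with B added to each of its bags. The new bags have size at most (pw(T1) + 1) + (pw(T2) + 1),
  and every vertex still occupies a consecutive run of bags: a vertex of X s other than s
  occurs only in the inserted block.
\<close>

section \<open>Walks and trees\<close>

lemma walk_singleton [simp]: "walk V E [x] \<longleftrightarrow> x \<in> V"
  by (simp add: walk_def)

lemma walk_Cons_Cons:
  "walk V E (x # y # ys) \<longleftrightarrow> x \<in> V \<and> {x, y} \<in> E \<and> walk V E (y # ys)"
  by (auto simp: walk_def nth_Cons' less_Suc_eq_0_disj)

lemma walk_nonempty: "walk V E xs \<Longrightarrow> xs \<noteq> []"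
  by (simp add: walk_def)

lemma walk_append_iff:
  assumes "xs \<noteq> []" "ys \<noteq> []"
  shows "walk V E (xs @ ys) \<longleftrightarrow> walk V E xs \<and> walk V E ys \<and> {last xs, hd ys} \<in> E"
  using assms
proof (induction xs rule: list_nonempty_induct)
  case (single x)
  then show ?case by (cases ys) (auto simp: walk_Cons_Cons)
next
  case (cons x xs)
  then show ?case by (cases xs) (auto simp: walk_Cons_Cons)
qed

lemma walk_join:
  assumes "walk V E xs" "walk V E ys" "last xs = hd ys"
  shows "walk V E (xs @ tl ys)"
proof (cases "tl ys = []")
  case False
  have "walk V E (tl ys)" "{hd ys, hd (tl ys)} \<in> E"
    using assms(2) walk_nonempty[OF assms(2)] walk_append_iff[of "[hd ys]" "tl ys" V E] False
    by simp_all
  then show ?thesis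
    using assms(1,3) walk_nonempty[OF assms(1)] by (simp add: walk_append_iff[OF _ False])
qed (use assms(1) in simp)

lemma last_append_tl: "ys \<noteq> [] \<Longrightarrow> last xs = hd ys \<Longrightarrow> last (xs @ tl ys) = last ys"
  by (cases ys) auto

lemma walk_rev: "walk V E xs \<Longrightarrow> walk V E (rev xs)"
proof (induction xs rule: induct_list012)
  case (3 x y ys)
  then have "walk V E (rev (y # ys) @ [x])"
    by (subst walk_append_iff) (auto simp: walk_Cons_Cons last_rev insert_commute)
  then show ?case by simp
qed (simp_all add: walk_def)

lemma walk_mono: "walk V E xs \<Longrightarrow> V \<subseteq> V' \<Longrightarrow> E \<subseteq> E' \<Longrightarrow> walk V' E' xs"
  by (auto simp: walk_def)

lemma walk_avoiding_edge: "walk V E xs \<Longrightarrow> z \<notin> set xs \<Longrightarrow> z \<in> e \<Longrightarrow> walk V (E - {e}) xs"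
  unfolding walk_def by (auto dest: nth_mem)

lemma walk_butlast:
  assumes "walk V E xs" "butlast xs \<noteq> []"
  shows "walk V E (butlast xs)" and "{last (butlast xs), last xs} \<in> E"
proof -
  have "walk V E (butlast xs @ [last xs])" using assms(1) walk_nonempty[OF assms(1)] by simp
  then show "walk V E (butlast xs)" "{last (butlast xs), last xs} \<in> E"
    by (simp_all add: walk_append_iff[OF assms(2)])
qed

lemma exists_distinct_walk:
  "walk V E xs \<Longrightarrow> \<exists>ys. walk V E ys \<and> distinct ys \<and> hd ys = hd xs \<and> last ys = last xs"
proof (induction "length xs" arbitrary: xs rule: less_induct)
  case less
  show ?case
  proof (cases "distinct xs")
    case False
    then obtain as y bs cs where xs: "xs = as @ [y] @ bs @ [y] @ cs"
      using not_distinct_decomp by blast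
    have "walk V E (as @ [y] @ bs)" "walk V E (y # cs)"
      using less.prems walk_append_iff[of "as @ [y] @ bs" "y # cs"] xs by auto
    then have "walk V E (as @ y # cs)"
      using walk_join[of V E "as @ [y]" "y # cs"] walk_append_iff[of "as @ [y]" bs]
      by (cases bs) auto
    moreover have "length (as @ y # cs) < length xs" "hd (as @ y # cs) = hd xs"
      "last (as @ y # cs) = last xs"
      using xs by (auto simp: hd_append last_append)
    ultimately show ?thesis using less.hyps by metis
  qed (use less.prems in blast)
qed

lemma graph_edgeE:
  assumes "graph V E" "e \<in> E"
  obtains u v where "e = {u, v}" "u \<noteq> v" "u \<in> V" "v \<in> V"
proof -
  have "e \<subseteq> V" "card e = 2" using assms by (auto simp: graph_def)
  then show ?thesis using that by (auto simp: card_2_iff)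
qed

lemma tree_edge_no_detour:
  assumes "tree V E" "{u, v} \<in> E" "u \<noteq> v"
    and "walk V (E - {{u, v}}) xs" "hd xs = u" "last xs = v"
  shows False
proof -
  obtain ys where ys: "walk V (E - {{u, v}}) ys" "distinct ys" "hd ys = u" "last ys = v"
    using exists_distinct_walk assms(4-6) by blast
  then obtain a b zs where ys_eq: "ys = a # b # zs"
    using \<open>u \<noteq> v\<close> walk_nonempty[OF ys(1)] by (cases ys; cases "tl ys") auto
  show False
  proof (cases zs)
    case Nil
    then show False using ys ys_eq by (simp add: walk_Cons_Cons)
  next
    case Cons
    have "is_cycle V E ys"
      unfolding is_cycle_def using ys ys_eq Cons assms(2) walk_mono[OF ys(1)]
      by (auto simp: insert_commute)
    then show False using assms(1) by (auto simp: tree_def)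
  qed
qed

lemma tree_edge_in_connected_subgraph:
  assumes "tree V E" "connected_graph V1 E1" "V1 \<subseteq> V" "E1 \<subseteq> E"
    and "e \<in> E" "e \<subseteq> V1"
  shows "e \<in> E1"
proof (rule ccontr)
  assume "e \<notin> E1"
  have "graph V E" using assms(1) by (simp add: tree_def connected_graph_def)
  then obtain u v where uv: "e = {u, v}" "u \<noteq> v" "u \<in> V" "v \<in> V"
    using graph_edgeE assms(5) by blast
  obtain xs where xs: "walk V1 E1 xs" "hd xs = u" "last xs = v"
    using assms(2,6) uv unfolding connected_graph_def by blast
  have "E1 \<subseteq> E - {{u, v}}" using assms(4) \<open>e \<notin> E1\<close> uv by blast
  then show False
    using tree_edge_no_detour[OF assms(1) _ uv(2) walk_mono[OF xs(1) assms(3)] xs(2,3)] assms(5) uv(1)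
    by blast
qed

section \<open>Attachment to a subtree\<close>

definition entering_walk :: "'a set \<Rightarrow> 'a set set \<Rightarrow> 'a set \<Rightarrow> 'a list \<Rightarrow> bool" where
  "entering_walk V E U xs \<longleftrightarrow> walk V E xs \<and> last xs \<in> U \<and> set (butlast xs) \<inter> U = {}"

lemma entering_walk_prefix:
  "walk V E xs \<Longrightarrow> last xs \<in> U \<Longrightarrow> \<exists>ys. entering_walk V E U ys \<and> hd ys = hd xs"
proof (induction xs rule: induct_list012)
  case (3 x y ys)
  show ?case
  proof (cases "x \<in> U")
    case True
    then show ?thesis using "3.prems" by (intro exI[of _ "[x]"]) (simp add: entering_walk_def walk_Cons_Cons)
  next
    case False
    obtain zs where zs: "entering_walk V E U zs" "hd zs = y"
      using "3.IH"(2) "3.prems" by (auto simp: walk_Cons_Cons)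
    then have "entering_walk V E U (x # zs)"
      using "3.prems" False walk_nonempty[of V E zs]
      by (cases zs) (auto simp: entering_walk_def walk_Cons_Cons)
    then show ?thesis by (intro exI[of _ "x # zs"]) simp
  qed
next
  case (2 x)
  then show ?case by (intro exI[of _ "[x]"]) (simp add: entering_walk_def)
qed (simp add: walk_def)

lemma entering_walk_from_inside:
  "entering_walk V E U xs \<Longrightarrow> hd xs \<in> U \<Longrightarrow> last xs = hd xs"
  unfolding entering_walk_def
  by (cases xs rule: rev_cases) (auto simp: walk_def hd_append dest: hd_in_set split: if_splits)

lemma entering_walk_last_edge:
  assumes "entering_walk V E U ys" "hd ys \<notin> U"
  shows "butlast ys \<noteq> []" "last (butlast ys) \<notin> U" "{last (butlast ys), last ys} \<in> E"
proof -
  have "walk V E ys" "last ys \<in> U" "set (butlast ys) \<inter> U = {}"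
    using assms(1) by (auto simp: entering_walk_def)
  moreover show "butlast ys \<noteq> []"
  proof
    assume "butlast ys = []"
    then have "hd ys = last ys" using walk_nonempty[OF \<open>walk V E ys\<close>] by (cases ys) auto
    then show False using assms(2) \<open>last ys \<in> U\<close> by simp
  qed
  ultimately show "last (butlast ys) \<notin> U" "{last (butlast ys), last ys} \<in> E"
    using walk_butlast(2) last_in_set by blast+
qed

text \<open>Well defined (through THE) only when U is a subtree of the tree (V, E), by
  \<open>entering_walk_unique\<close>.\<close>
definition attachment :: "'a set \<Rightarrow> 'a set set \<Rightarrow> 'a set \<Rightarrow> 'a \<Rightarrow> 'a" where
  "attachment V E U r = (THE a. \<exists>xs. entering_walk V E U xs \<and> hd xs = r \<and> last xs = a)"

locale tree_subtree =
  fixes V E U F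
  assumes tree: "tree V E" and subtree: "subtree U F V E"
begin

lemma subtree_connected: "connected_graph U F"
  and subtree_vertices: "U \<subseteq> V" and subtree_edges: "F \<subseteq> E"
  using subtree by (auto simp: subtree_def subgraph_def)

lemma entering_walk_exists: "r \<in> V \<Longrightarrow> \<exists>xs. entering_walk V E U xs \<and> hd xs = r"
proof -
  assume "r \<in> V"
  obtain u where "u \<in> U" using subtree_connected by (auto simp: connected_graph_def)
  then obtain xs where "walk V E xs" "hd xs = r" "last xs = u"
    using tree \<open>r \<in> V\<close> subtree_vertices unfolding tree_def connected_graph_def by blast
  then show ?thesis using entering_walk_prefix[of V E xs U] \<open>u \<in> U\<close> by auto
qed

text \<open>Two walks from r entering U at different vertices a and b would give, together with a
  walk from a to b inside the subtree, a detour around the last edge of the walk to b.\<close>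
lemma entering_walk_unique:
  assumes xs: "entering_walk V E U xs" and ys: "entering_walk V E U ys" and "hd xs = hd ys"
  shows "last xs = last ys"
proof (rule ccontr)
  assume ab: "last xs \<noteq> last ys"
  have "hd ys \<notin> U"
  proof
    assume "hd ys \<in> U"
    then have "last xs = hd xs" "last ys = hd ys"
      using entering_walk_from_inside[OF xs] entering_walk_from_inside[OF ys] \<open>hd xs = hd ys\<close>
      by simp_all
    then show False using ab \<open>hd xs = hd ys\<close> by simp
  qed
  define a b x where "a = last xs" and "b = last ys" and "x = last (butlast ys)"
  have "butlast ys \<noteq> []" "x \<notin> U" "{x, b} \<in> E"
    using entering_walk_last_edge[OF ys \<open>hd ys \<notin> U\<close>] unfolding x_def b_def by blast+
  have walk_xs: "walk V E xs" "set (butlast xs) \<inter> U = {}" and "a \<in> U"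
    and walk_ys: "walk V E ys" "set (butlast ys) \<inter> U = {}" and "b \<in> U"
    using xs ys by (auto simp: entering_walk_def a_def b_def)
  then obtain p where p: "walk U F p" "hd p = a" "last p = b"
    using subtree_connected unfolding connected_graph_def by blast
  have "b \<notin> set (butlast ys)" using walk_ys(2) \<open>b \<in> U\<close> by blast
  then have w1: "walk V (E - {{x, b}}) (rev (butlast ys))"
    using walk_avoiding_edge[OF walk_rev[OF walk_butlast(1)[OF walk_ys(1) \<open>butlast ys \<noteq> []\<close>]], of b]
    by simp
  have "b \<notin> set xs"
  proof
    assume "b \<in> set xs"
    then have "b \<in> set (butlast xs) \<or> b = a" unfolding a_def by (cases xs rule: rev_cases) auto
    then show False using walk_xs(2) \<open>b \<in> U\<close> ab a_def b_def by auto
  qed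
  then have w2: "walk V (E - {{x, b}}) xs" using walk_avoiding_edge[OF walk_xs(1), of b] by simp
  have "x \<notin> set p" using p(1) \<open>x \<notin> U\<close> by (auto simp: walk_def)
  then have w3: "walk V (E - {{x, b}}) p"
    using walk_avoiding_edge[OF walk_mono[OF p(1) subtree_vertices subtree_edges], of x] by simp
  have hd_butlast: "hd (butlast ys) = hd xs"
    using \<open>butlast ys \<noteq> []\<close> \<open>hd xs = hd ys\<close> by (cases ys rule: rev_cases) auto
  have last_rx: "last (rev (butlast ys) @ tl xs) = a"
    using last_append_tl[OF walk_nonempty[OF walk_xs(1)], of "rev (butlast ys)"] hd_butlast
    unfolding a_def by (simp add: last_rev)
  have "walk V (E - {{x, b}}) ((rev (butlast ys) @ tl xs) @ tl p)"
    using walk_join[OF walk_join[OF w1 w2] w3] hd_butlast last_rx p(2) by (simp add: last_rev)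
  moreover have "hd ((rev (butlast ys) @ tl xs) @ tl p) = x"
    using \<open>butlast ys \<noteq> []\<close> by (simp add: x_def hd_rev)
  moreover have "last ((rev (butlast ys) @ tl xs) @ tl p) = b"
    using last_append_tl[OF walk_nonempty[OF p(1)], of "rev (butlast ys) @ tl xs"] last_rx p(2,3)
    by simp
  moreover have "x \<noteq> b" using \<open>x \<notin> U\<close> \<open>b \<in> U\<close> by blast
  ultimately show False using tree_edge_no_detour[OF tree \<open>{x, b} \<in> E\<close>] by blast
qed

lemma attachment_eq:
  assumes "entering_walk V E U xs"
  shows "attachment V E U (hd xs) = last xs"
  unfolding attachment_def
proof (rule the_equality)
  fix a
  assume "\<exists>ys. entering_walk V E U ys \<and> hd ys = hd xs \<and> last ys = a"
  then obtain ys where "entering_walk V E U ys" "hd ys = hd xs" "last ys = a" by blast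
  then show "a = last xs" using entering_walk_unique[OF _ assms] by simp
qed (use assms in blast)

lemma attachment_in_subtree: "r \<in> V \<Longrightarrow> attachment V E U r \<in> U"
proof -
  assume "r \<in> V"
  then obtain xs where "entering_walk V E U xs" "hd xs = r" using entering_walk_exists by blast
  then show ?thesis using attachment_eq by (fastforce simp: entering_walk_def)
qed

lemma attachment_of_subtree_vertex: "s \<in> U \<Longrightarrow> attachment V E U s = s"
  using attachment_eq[of "[s]"] subtree_vertices by (auto simp: entering_walk_def)

lemma attachment_edge:
  assumes "{r, y} \<in> E" "r \<notin> U"
  shows "attachment V E U r = attachment V E U y"
proof -
  have "r \<in> V" "y \<in> V"
    using assms(1) tree by (auto simp: tree_def connected_graph_def graph_def)
  then obtain ys where ys: "entering_walk V E U ys" "hd ys = y"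
    using entering_walk_exists by blast
  then have "entering_walk V E U (r # ys)"
    using assms \<open>r \<in> V\<close> walk_nonempty[of V E ys]
    by (cases ys) (auto simp: entering_walk_def walk_Cons_Cons)
  from attachment_eq[OF this] attachment_eq[OF ys(1)] show ?thesis
    using ys walk_nonempty[of V E ys] by (auto simp: entering_walk_def)
qed

lemma edge_leaving_subtree:
  assumes "e \<in> E" "\<not> e \<subseteq> U"
  obtains s where "s \<in> U" "\<And>v. v \<in> e \<Longrightarrow> attachment V E U v = s"
proof -
  have graph: "graph V E" using tree by (simp add: tree_def connected_graph_def)
  obtain u v where uv: "e = {u, v}" "u \<noteq> v" "u \<in> V" "v \<in> V"
    by (rule graph_edgeE[OF graph assms(1)])
  have same: "attachment V E U u = attachment V E U v"
  proof (cases "u \<in> U")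
    case True
    then have "v \<notin> U" using assms(2) uv(1) by simp
    then show ?thesis using attachment_edge[of v u] assms(1) uv(1) by (simp add: insert_commute)
  next
    case False
    then show ?thesis using attachment_edge[of u v] assms(1) uv(1) by simp
  qed
  show ?thesis
  proof (rule that)
    show "attachment V E U u \<in> U" using attachment_in_subtree[OF uv(3)] .
  next
    fix w assume "w \<in> e"
    then show "attachment V E U w = attachment V E U u" using uv(1) same by auto
  qed
qed

lemma subtree_branches_cover_vertices:
  "W \<subseteq> V \<Longrightarrow> W \<subseteq> U \<union> (\<Union>s\<in>U. {v \<in> W. attachment V E U v = s})"
  using attachment_in_subtree by blast

lemma subtree_branches_cover_edges:
  assumes "graph W E'" "E' \<subseteq> E"
  shows "E' \<subseteq> F \<union> (\<Union>s\<in>U. {e \<in> E'. e \<subseteq> {v \<in> W. attachment V E U v = s}})"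
proof
  fix e assume e: "e \<in> E'"
  show "e \<in> F \<union> (\<Union>s\<in>U. {e \<in> E'. e \<subseteq> {v \<in> W. attachment V E U v = s}})"
  proof (cases "e \<subseteq> U")
    case True
    then show ?thesis
      using tree_edge_in_connected_subgraph[OF tree subtree_connected subtree_vertices subtree_edges]
        e assms(2) by blast
  next
    case False
    then obtain s where "s \<in> U" "\<And>v. v \<in> e \<Longrightarrow> attachment V E U v = s"
      using edge_leaving_subtree e assms(2) by blast
    moreover have "e \<subseteq> W" using assms(1) e by (simp add: graph_def)
    ultimately show ?thesis using e by blast
  qed
qed

end

section \<open>Splicing path decompositions\<close>

definition consecutive :: "(nat \<Rightarrow> bool) \<Rightarrow> nat \<Rightarrow> bool" where
  "consecutive P n \<longleftrightarrow> (\<forall>i j k. i \<le> j \<longrightarrow> j \<le> k \<longrightarrow> k < n \<longrightarrow> P i \<longrightarrow> P k \<longrightarrow> P j)"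

lemma consecutive_cong: "(\<And>j. j < n \<Longrightarrow> P j = Q j) \<Longrightarrow> consecutive P n = consecutive Q n"
  unfolding consecutive_def by (auto 0 4 dest: le_less_trans)

lemma consecutive_reindex:
  assumes "consecutive P m" "\<And>j. j < n \<Longrightarrow> f j < m" "\<And>i j. i \<le> j \<Longrightarrow> j < n \<Longrightarrow> f i \<le> f j"
  shows "consecutive (\<lambda>j. P (f j)) n"
  unfolding consecutive_def
proof (intro allI impI)
  fix i j k assume "i \<le> j" "j \<le> k" "k < n" "P (f i)" "P (f k)"
  then show "P (f j)"
    using assms(1)[unfolded consecutive_def, rule_format, of "f i" "f j" "f k"] assms(2,3) by simp
qed

lemma consecutive_shift:
  assumes "consecutive P m"
  shows "consecutive (\<lambda>j. a \<le> j \<and> j < a + m \<and> P (j - a)) n"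
  unfolding consecutive_def
proof (intro allI impI)
  fix i j k
  assume "i \<le> j" "j \<le> k" "k < n"
    and "a \<le> i \<and> i < a + m \<and> P (i - a)" "a \<le> k \<and> k < a + m \<and> P (k - a)"
  moreover have "i - a \<le> j - a" "j - a \<le> k - a" "k - a < m"
    using calculation by (simp_all add: diff_le_mono less_diff_conv2)
  ultimately show "a \<le> j \<and> j < a + m \<and> P (j - a)"
    using assms[unfolded consecutive_def, rule_format, of "i - a" "j - a" "k - a"] by simp
qed

lemma path_decomp_iff:
  "path_decomp V E bs \<longleftrightarrow> (\<forall>B\<in>set bs. B \<subseteq> V) \<and> (\<forall>e\<in>E. \<exists>B\<in>set bs. e \<subseteq> B) \<and>
     (\<forall>v\<in>V. (\<exists>B\<in>set bs. v \<in> B) \<and> consecutive (\<lambda>j. v \<in> bs ! j) (length bs))"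
  by (simp add: path_decomp_def consecutive_def)

lemma path_decomp_mono_edges: "path_decomp V E' bs \<Longrightarrow> E \<subseteq> E' \<Longrightarrow> path_decomp V E bs"
  by (auto simp: path_decomp_def)

lemma path_decomp_restrict:
  assumes "path_decomp V E bs" "X \<subseteq> V"
  shows "path_decomp X {e \<in> E. e \<subseteq> X} (map (\<lambda>B. B \<inter> X) bs)"
proof -
  have "consecutive (\<lambda>j. v \<in> map (\<lambda>B. B \<inter> X) bs ! j) (length bs)" if "v \<in> X" for v
    using assms that consecutive_cong[of "length bs" "\<lambda>j. v \<in> map (\<lambda>B. B \<inter> X) bs ! j"]
    by (auto simp: path_decomp_iff)
  then show ?thesis using assms by (fastforce simp: path_decomp_iff)
qed

definition splice_after :: "'a set list \<Rightarrow> nat \<Rightarrow> 'a set list \<Rightarrow> 'a set list" where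
  "splice_after bs i cs = take (Suc i) bs @ map ((\<union>) (bs ! i)) cs @ drop (Suc i) bs"

lemma length_splice_after: "i < length bs \<Longrightarrow> length (splice_after bs i cs) = length bs + length cs"
  by (simp add: splice_after_def)

lemma set_splice_after:
  "set (splice_after bs i cs) = set (take (Suc i) bs) \<union> (\<union>) (bs ! i) ` set cs \<union> set (drop (Suc i) bs)"
  by (simp add: splice_after_def Un_assoc)

lemma set_subset_set_splice_after: "set bs \<subseteq> set (splice_after bs i cs)"
proof -
  have "set bs = set (take (Suc i) bs) \<union> set (drop (Suc i) bs)"
    by (metis append_take_drop_id set_append)
  then show ?thesis unfolding set_splice_after by blast
qed

lemma nth_splice_after:
  assumes "i < length bs" "j < length bs + length cs"
  shows "splice_after bs i cs ! j =
    (if j \<le> i then bs ! j else if j < Suc i + length cs then bs ! i \<union> cs ! (j - Suc i)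
     else bs ! (j - length cs))"
proof -
  have len: "length (take (Suc i) bs) = Suc i" using assms(1) by simp
  consider "j \<le> i" | "i < j" "j < Suc i + length cs" | "Suc i + length cs \<le> j"
    by linarith
  then show ?thesis
  proof cases
    case 3
    have "drop (Suc i) bs ! (j - Suc i - length cs) = bs ! (Suc i + (j - Suc i - length cs))"
      by (rule nth_drop) (use assms(1) in simp)
    also have "Suc i + (j - Suc i - length cs) = j - length cs" using 3 by simp
    finally have "drop (Suc i) bs ! (j - Suc i - length cs) = bs ! (j - length cs)" .
    moreover have "\<not> j < Suc i" "\<not> j - Suc i < length cs" using 3 by auto
    then have "splice_after bs i cs ! j = drop (Suc i) bs ! (j - Suc i - length cs)"
      unfolding splice_after_def by (simp only: nth_append len length_map if_False)
    ultimately show ?thesis using 3 by simp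
  qed (use len in \<open>auto simp: splice_after_def nth_append\<close>)
qed

lemma consecutive_splice_after_old:
  assumes "i < length bs" "consecutive (\<lambda>j. v \<in> bs ! j) (length bs)"
    and "\<And>C. C \<in> set cs \<Longrightarrow> v \<in> C \<Longrightarrow> v \<in> bs ! i"
  shows "consecutive (\<lambda>j. v \<in> splice_after bs i cs ! j) (length (splice_after bs i cs))"
proof -
  define f where "f j = (if j \<le> i then j else if j < Suc i + length cs then i else j - length cs)" for j
  have mem: "v \<in> splice_after bs i cs ! j \<longleftrightarrow> v \<in> bs ! f j" if "j < length bs + length cs" for j
  proof -
    have "v \<in> cs ! (j - Suc i) \<Longrightarrow> j - Suc i < length cs \<Longrightarrow> v \<in> bs ! i"
      using assms(3) nth_mem by blast
    then show ?thesis using nth_splice_after[OF assms(1) that] by (auto simp: f_def)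
  qed
  have "consecutive (\<lambda>j. v \<in> bs ! f j) (length bs + length cs)"
    by (rule consecutive_reindex[OF assms(2)]) (use assms(1) in \<open>auto simp: f_def\<close>)
  moreover have "consecutive (\<lambda>j. v \<in> splice_after bs i cs ! j) (length bs + length cs) =
      consecutive (\<lambda>j. v \<in> bs ! f j) (length bs + length cs)"
    by (rule consecutive_cong) (rule mem)
  ultimately show ?thesis unfolding length_splice_after[OF assms(1)] by simp
qed

lemma consecutive_splice_after_new:
  assumes "i < length bs" "consecutive (\<lambda>j. v \<in> cs ! j) (length cs)" "\<forall>B\<in>set bs. v \<notin> B"
  shows "consecutive (\<lambda>j. v \<in> splice_after bs i cs ! j) (length (splice_after bs i cs))"
proof -
  have mem: "v \<in> splice_after bs i cs ! j \<longleftrightarrow> Suc i \<le> j \<and> j < Suc i + length cs \<and> v \<in> cs ! (j - Suc i)"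
    if "j < length bs + length cs" for j
  proof -
    have "v \<notin> bs ! k" if "k < length bs" for k using assms(3) nth_mem[OF that] by blast
    then show ?thesis using nth_splice_after[OF assms(1) that] assms(1) that by auto
  qed
  have "consecutive (\<lambda>j. v \<in> splice_after bs i cs ! j) (length bs + length cs) =
      consecutive (\<lambda>j. Suc i \<le> j \<and> j < Suc i + length cs \<and> v \<in> cs ! (j - Suc i))
        (length bs + length cs)"
    by (rule consecutive_cong) (rule mem)
  then show ?thesis unfolding length_splice_after[OF assms(1)]
    using consecutive_shift[OF assms(2), of "Suc i"] by (simp only:)
qed

lemma path_decomp_splice_after:
  assumes bs: "path_decomp W F bs" and i: "i < length bs"
    and cs: "path_decomp X G cs" and overlap: "X \<inter> W \<subseteq> bs ! i"
  shows "path_decomp (W \<union> X) (F \<union> G) (splice_after bs i cs)"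
  unfolding path_decomp_iff
proof (intro conjI ballI)
  have bags_bs: "\<forall>B\<in>set bs. B \<subseteq> W" and edges_bs: "\<forall>e\<in>F. \<exists>B\<in>set bs. e \<subseteq> B"
    and verts_bs: "\<forall>v\<in>W. \<exists>B\<in>set bs. v \<in> B"
    and consec_bs: "\<forall>v\<in>W. consecutive (\<lambda>j. v \<in> bs ! j) (length bs)"
    using bs by (auto simp: path_decomp_iff)
  have bags_cs: "\<forall>C\<in>set cs. C \<subseteq> X" and edges_cs: "\<forall>e\<in>G. \<exists>C\<in>set cs. e \<subseteq> C"
    and verts_cs: "\<forall>v\<in>X. \<exists>C\<in>set cs. v \<in> C"
    and consec_cs: "\<forall>v\<in>X. consecutive (\<lambda>j. v \<in> cs ! j) (length cs)"
    using cs by (auto simp: path_decomp_iff)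
  have old: "B \<in> set (splice_after bs i cs)" if "B \<in> set bs" for B
    using that set_subset_set_splice_after by blast
  have grafted: "bs ! i \<union> C \<in> set (splice_after bs i cs)" if "C \<in> set cs" for C
    using that by (simp add: set_splice_after)
  show "B \<subseteq> W \<union> X" if "B \<in> set (splice_after bs i cs)" for B
  proof -
    have "B \<in> set bs \<or> (\<exists>C\<in>set cs. B = bs ! i \<union> C)"
      using that unfolding set_splice_after by (auto dest: in_set_takeD in_set_dropD)
    then show ?thesis using bags_bs bags_cs nth_mem[OF i] by blast
  qed
  show "\<exists>B\<in>set (splice_after bs i cs). e \<subseteq> B" if "e \<in> F \<union> G" for e
    using that edges_bs edges_cs old grafted by (meson Un_iff le_supI2)
  fix v assume v: "v \<in> W \<union> X"
  show "\<exists>B\<in>set (splice_after bs i cs). v \<in> B"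
    using v verts_bs verts_cs old grafted by (meson Un_iff)
  show "consecutive (\<lambda>j. v \<in> splice_after bs i cs ! j) (length (splice_after bs i cs))"
  proof (cases "v \<in> W")
    case True
    then show ?thesis
      using consecutive_splice_after_old[OF i] consec_bs bags_cs overlap by blast
  next
    case False
    then show ?thesis
      using consecutive_splice_after_new[OF i] consec_cs bags_bs v by blast
  qed
qed

lemma card_splice_after_le:
  assumes "\<forall>B\<in>set bs. card B \<le> m" "\<forall>C\<in>set cs. card (bs ! i) + card C \<le> m"
  shows "\<forall>D\<in>set (splice_after bs i cs). card D \<le> m"
  using assms card_Un_le[of "bs ! i"] unfolding set_splice_after
  by (fastforce dest: in_set_takeD in_set_dropD intro: le_trans)

lemma path_decomp_graft_family:
  assumes bs: "path_decomp W F bs" "\<forall>B\<in>set bs. card B \<le> k"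
    and S: "finite S" "S \<subseteq> W"
    and cs: "\<And>s. s \<in> S \<Longrightarrow> path_decomp (X s) (G s) (cs s)"
    and cs_card: "\<And>s C. s \<in> S \<Longrightarrow> C \<in> set (cs s) \<Longrightarrow> card C \<le> l"
    and X_W: "\<And>s. s \<in> S \<Longrightarrow> X s \<inter> W \<subseteq> {s}"
    and X_disjoint: "\<And>s t. s \<in> S \<Longrightarrow> t \<in> S \<Longrightarrow> s \<noteq> t \<Longrightarrow> X s \<inter> X t = {}"
  shows "\<exists>ds. path_decomp (W \<union> \<Union>(X ` S)) (F \<union> \<Union>(G ` S)) ds \<and>
    (\<forall>D\<in>set ds. card D \<le> k + l) \<and> set bs \<subseteq> set ds"
  using S(1) subset_refl[of S]
proof (induction S rule: finite_subset_induct')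
  case empty
  have "\<forall>B\<in>set bs. card B \<le> k + l" using bs(2) by fastforce
  then show ?case using bs(1) by auto
next
  case (insert a T)
  then obtain ds where ds: "path_decomp (W \<union> \<Union>(X ` T)) (F \<union> \<Union>(G ` T)) ds"
    "\<forall>D\<in>set ds. card D \<le> k + l" "set bs \<subseteq> set ds"
    by blast
  have "a \<in> W" using insert.hyps(2) S(2) by blast
  then obtain B where B: "B \<in> set bs" "a \<in> B"
    using bs(1) unfolding path_decomp_iff by blast
  then have "B \<in> set ds" using ds(3) by blast
  then obtain i where i: "i < length ds" "ds ! i = B" by (auto simp: in_set_conv_nth)
  have "X a \<inter> W \<subseteq> {a}" using X_W insert.hyps(2) by blast
  moreover have "X a \<inter> X t = {}" if "t \<in> T" for t
    using X_disjoint[of a t] insert.hyps(2-4) that by blast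
  ultimately have "X a \<inter> (W \<union> \<Union>(X ` T)) \<subseteq> ds ! i" using B(2) i(2) by blast
  then have "path_decomp ((W \<union> \<Union>(X ` T)) \<union> X a) ((F \<union> \<Union>(G ` T)) \<union> G a)
      (splice_after ds i (cs a))"
    using path_decomp_splice_after[OF ds(1) i(1) cs[OF insert.hyps(2)]] by blast
  moreover have "\<forall>D\<in>set (splice_after ds i (cs a)). card D \<le> k + l"
    using ds(2) bs(2) B(1) cs_card[OF insert.hyps(2)] i(2)
    by (intro card_splice_after_le) (auto intro: add_mono)
  moreover have "set bs \<subseteq> set (splice_after ds i (cs a))"
    using ds(3) set_subset_set_splice_after by blast
  ultimately show ?case by (intro exI[of _ "splice_after ds i (cs a)"]) (simp add: Un_ac)
qed

lemma pathwidth_witness: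
  assumes "graph V E"
  shows "\<exists>bs. path_decomp V E bs \<and> (\<forall>B\<in>set bs. card B \<le> pathwidth V E + 1)"
proof -
  have "path_decomp V E [V]" using assms by (auto simp: path_decomp_def graph_def)
  then have "\<exists>k bs. path_decomp V E bs \<and> (\<forall>B\<in>set bs. card B \<le> k + 1)"
    by (intro exI[of _ "card V"] exI[of _ "[V]"]) simp
  then show ?thesis unfolding pathwidth_def by (rule LeastI_ex)
qed

lemma pathwidth_le:
  "path_decomp V E bs \<Longrightarrow> \<forall>B\<in>set bs. card B \<le> k + 1 \<Longrightarrow> pathwidth V E \<le> k"
  unfolding pathwidth_def by (blast intro: Least_le)


lemma (in tree_subtree) path_decomp_tree_union:
  assumes "subgraph W E' V E" "V = U \<union> W" "E = F \<union> E'"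
    and bs: "path_decomp U F bs" "\<forall>B\<in>set bs. card B \<le> k"
    and cs: "path_decomp W E' cs" "\<forall>C\<in>set cs. card C \<le> l"
  shows "\<exists>ds. path_decomp V E ds \<and> (\<forall>D\<in>set ds. card D \<le> k + l)"
proof -
  have graph: "graph W E'" and "W \<subseteq> V" "E' \<subseteq> E"
    using assms(1) by (auto simp: subgraph_def)
  define X where "X s = {v \<in> W. attachment V E U v = s}" for s
  define G where "G s = {e \<in> E'. e \<subseteq> X s}" for s
  have "\<exists>ds. path_decomp (U \<union> \<Union>(X ` U)) (F \<union> \<Union>(G ` U)) ds \<and>
      (\<forall>D\<in>set ds. card D \<le> k + l) \<and> set bs \<subseteq> set ds"
  proof (rule path_decomp_graft_family[OF bs _ subset_refl,
        where cs = "\<lambda>s. map (\<lambda>C. C \<inter> X s) cs"])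
    show "finite U" using subtree by (simp add: subtree_def subgraph_def graph_def)
    show "path_decomp (X s) (G s) (map (\<lambda>C. C \<inter> X s) cs)" for s
      unfolding G_def by (rule path_decomp_restrict[OF cs(1)]) (auto simp: X_def)
    show "card C' \<le> l" if C': "C' \<in> set (map (\<lambda>C. C \<inter> X s) cs)" for s C'
    proof -
      obtain C where C: "C \<in> set cs" "C' = C \<inter> X s" using C' by auto
      then have "C \<subseteq> W" using cs(1) by (simp add: path_decomp_def)
      then have "finite C" using graph finite_subset by (auto simp: graph_def)
      then have "card C' \<le> card C" unfolding C(2) by (simp add: card_mono)
      then show ?thesis using cs(2) C(1) by fastforce
    qed
    show "X s \<inter> U \<subseteq> {s}" for s using attachment_of_subtree_vertex by (auto simp: X_def)
    show "X s \<inter> X t = {}" if "s \<noteq> t" for s t using that by (auto simp: X_def)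
  qed
  then obtain ds where "path_decomp (U \<union> \<Union>(X ` U)) (F \<union> \<Union>(G ` U)) ds"
    "\<forall>D\<in>set ds. card D \<le> k + l"
    by blast
  moreover have "U \<union> \<Union>(X ` U) = V"
    using subtree_branches_cover_vertices[OF \<open>W \<subseteq> V\<close>] assms(2) subtree_vertices \<open>W \<subseteq> V\<close>
    unfolding X_def by blast
  moreover have "E \<subseteq> F \<union> \<Union>(G ` U)"
    using subtree_branches_cover_edges[OF graph \<open>E' \<subseteq> E\<close>] assms(3) unfolding G_def X_def by blast
  ultimately show ?thesis using path_decomp_mono_edges by blast
qed

theorem lemma7:
  fixes V V1 V2 :: "'a set" and E E1 E2 :: "'a set set"
  assumes "tree V E"
    and "subtree V1 E1 V E" and "subtree V2 E2 V E"
    and "V = V1 \<union> V2" and "E = E1 \<union> E2"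
  shows "pathwidth V E + 1 \<le> (pathwidth V1 E1 + 1) + (pathwidth V2 E2 + 1)"
proof -
  interpret tree_subtree V E V1 E1 using assms(1,2) by unfold_locales
  have "graph V1 E1" "subgraph V2 E2 V E"
    using assms(2,3) by (auto simp: subtree_def subgraph_def)
  then have "graph V2 E2" by (simp add: subgraph_def)
  obtain bs1 where "path_decomp V1 E1 bs1" "\<forall>B\<in>set bs1. card B \<le> pathwidth V1 E1 + 1"
    using pathwidth_witness[OF \<open>graph V1 E1\<close>] by blast
  moreover obtain bs2 where "path_decomp V2 E2 bs2" "\<forall>C\<in>set bs2. card C \<le> pathwidth V2 E2 + 1"
    using pathwidth_witness[OF \<open>graph V2 E2\<close>] by blast
  ultimately obtain ds where "path_decomp V E ds"
      "\<forall>D\<in>set ds. card D \<le> (pathwidth V1 E1 + 1) + (pathwidth V2 E2 + 1)"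
    using path_decomp_tree_union[OF \<open>subgraph V2 E2 V E\<close> assms(4,5)] by blast
  then have "pathwidth V E \<le> pathwidth V1 E1 + pathwidth V2 E2 + 1"
    by (intro pathwidth_le) auto
  then show ?thesis by simp
qed

end
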